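(* The cellular automaton $F$ on the free group $G$ with generators $a,b$ and alphabet $A=\{0,1,\iota,\beta\}$ described in the context has no equicontinuity point.
   Context: $G$ is the free group on $\{a,b\}$ with generating set $E=\{a,a^{-1},b,b^{-1}\}$, word norm $\|g\|$, and Cantor metric $d(x,y)=2^{-k}$, $k=\min\{\|g\|:x_g\neq y_g\}$, on $A^G$, with closed balls $B$. In a configuration $c\in A^G$, a position $g$ is free if $c_g\in\{0,1\}$ and $|\{g'\in gE: c_{g'}\in\{0,1\}\}|\geq 2$. A position $g$ is blocked in $c$ if either ($c_g=\iota$ and $c_{g'}\in\{\iota,\beta\}$ for all $g'\in gE$), or ($c_g=\beta$ and exactly one $g'\in gE$ has $c_{g'}=\iota$ and all other elements of $gE$ are free in $c$). The map $F:A^G\to A^G$ is defined by: $F(c)_g=c_g+\sum_{g'\in gE,\,c_{g'}\in\{0,1\}}c_{g'}\bmod 2$ if $c_g\in\{0,1\}$; $F(c)_g=c_g$ if $g$ is blocked in $c$; $F(c)_g=0$ otherwise. (It is a cellular automaton of radius 2.) $x$ is an equicontinuity point of $F$ if $\forall\epsilon>0\,\exists\delta>0\,\forall t\in\mathbb{N}$, $F^t(B(x,\delta))\subseteq B(F^t(x),\epsilon)$. *)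

theory Defs
  imports Complex_Main
begin

datatype gen = GA | GAi | GB | GBi

fun ginv :: "gen \<Rightarrow> gen" where
  "ginv GA = GAi" | "ginv GAi = GA" | "ginv GB = GBi" | "ginv GBi = GB"

fun reduced :: "gen list \<Rightarrow> bool" where
  "reduced (x # y # ys) = (y \<noteq> ginv x \<and> reduced (y # ys))"
| "reduced _ = True"

typedef fg = "{w :: gen list. reduced w}"
  by (rule exI[of _ "[]"]) simp

definition rstep :: "gen list \<Rightarrow> gen \<Rightarrow> gen list" where
  "rstep w e = (if w \<noteq> [] \<and> last w = ginv e then butlast w else w @ [e])"

definition gmul :: "fg \<Rightarrow> gen \<Rightarrow> fg" where
  "gmul g e = Abs_fg (rstep (Rep_fg g) e)"

definition nbhd :: "fg \<Rightarrow> fg set" where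
  "nbhd g = gmul g ` UNIV"

definition wnorm :: "fg \<Rightarrow> nat" where
  "wnorm g = length (Rep_fg g)"

datatype sym = S0 | S1 | Iota | Beta

fun sval :: "sym \<Rightarrow> nat" where
  "sval S1 = 1" | "sval _ = 0"

definition isbit :: "sym \<Rightarrow> bool" where
  "isbit s \<longleftrightarrow> s = S0 \<or> s = S1"

type_synonym config = "fg \<Rightarrow> sym"

definition free_pos :: "config \<Rightarrow> fg \<Rightarrow> bool" where
  "free_pos c g \<longleftrightarrow> isbit (c g) \<and> card {g' \<in> nbhd g. isbit (c g')} \<ge> 2"

definition blocked :: "config \<Rightarrow> fg \<Rightarrow> bool" where
  "blocked c g \<longleftrightarrow>
     (c g = Iota \<and> (\<forall>g'\<in>nbhd g. c g' = Iota \<or> c g' = Beta))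
   \<or> (c g = Beta \<and> (\<exists>!g'. g' \<in> nbhd g \<and> c g' = Iota)
        \<and> (\<forall>g'\<in>nbhd g. c g' \<noteq> Iota \<longrightarrow> free_pos c g'))"

definition bit_of :: "nat \<Rightarrow> sym" where
  "bit_of n = (if n mod 2 = 0 then S0 else S1)"

definition CA :: "config \<Rightarrow> config" where
  "CA c g =
    (if isbit (c g) then bit_of (sval (c g) + (\<Sum>g'\<in>{g' \<in> nbhd g. isbit (c g')}. sval (c g')))
     else if blocked c g then c g
     else S0)"

definition cdist :: "config \<Rightarrow> config \<Rightarrow> real" where
  "cdist x y = (if x = y then 0
     else (1/2) ^ (LEAST k. \<exists>g. wnorm g = k \<and> x g \<noteq> y g))"

definition equicont_point :: "(config \<Rightarrow> config) \<Rightarrow> config \<Rightarrow> bool" where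
  "equicont_point F x \<longleftrightarrow>
     (\<forall>\<epsilon>>0. \<exists>\<delta>>0. \<forall>t::nat. \<forall>y. cdist x y \<le> \<delta> \<longrightarrow> cdist ((F ^^ t) x) ((F ^^ t) y) \<le> \<epsilon>)"

end

theory Submission
  imports Defs "HOL-Library.Sublist"
begin

text \<open>If no cell of F(x) is a bit, x is the constant \<open>\<iota>\<close> configuration, a fixed point; replacing
  it by 0 outside a large ball makes the \<open>\<iota>\<close> region erode one layer per step until the identity
  cell changes. Otherwise some cell g0 of F(x) is a bit. Bits are permanent, and every bit cell has a
  child that is a bit one step later, so along some ray leaving g0 the cells successively become bits.
  Replace x by 0 outside a large ball and flip a bit far out on that ray. The pattern of non-bit
  cells never changes, so the difference spreads at speed one, and each ray cell it reaches is a
  bit with a single differing neighbour; by the XOR rule the difference travels back to g0. Thus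
  arbitrarily small perturbations of x change the state of g0 at some time.\<close>

section \<open>Reduced words\<close>

lemma ginv_ginv [simp]: "ginv (ginv e) = e"
  by (cases e) auto

lemma ginv_neq [simp]: "ginv e \<noteq> e"
  by (cases e) auto

lemma reduced_snoc: "reduced (w @ [e]) \<longleftrightarrow> reduced w \<and> (w = [] \<or> e \<noteq> ginv (last w))"
  by (induction w rule: reduced.induct) auto

lemma reduced_appendD: "reduced (xs @ ys) \<Longrightarrow> reduced xs"
  by (induction xs rule: reduced.induct) (auto simp: Cons_eq_append_conv)

lemma reduced_take: "reduced w \<Longrightarrow> reduced (take i w)"
  by (metis append_take_drop_id reduced_appendD)

lemma reduced_rstep: "reduced w \<Longrightarrow> reduced (rstep w e)"
  by (auto simp: rstep_def butlast_conv_take reduced_take reduced_snoc)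

lemma reduced_Rep_fg [simp]: "reduced (Rep_fg g)"
  using Rep_fg by simp

lemma Rep_fg_Abs_fg [simp]: "reduced w \<Longrightarrow> Rep_fg (Abs_fg w) = w"
  by (simp add: Abs_fg_inverse)

lemma Rep_fg_gmul: "Rep_fg (gmul g e) = rstep (Rep_fg g) e"
  by (simp add: gmul_def reduced_rstep)

lemma Rep_fg_gmul_cases:
  "Rep_fg (gmul g e) = Rep_fg g @ [e] \<or> Rep_fg (gmul g e) = butlast (Rep_fg g)"
  by (simp add: Rep_fg_gmul rstep_def)

lemma Rep_fg_gmul_snoc:
  "Rep_fg g = [] \<or> last (Rep_fg g) \<noteq> ginv e \<Longrightarrow> Rep_fg (gmul g e) = Rep_fg g @ [e]"
  by (auto simp: Rep_fg_gmul rstep_def)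

lemma exists_child: "\<exists>e. Rep_fg (gmul g e) = Rep_fg g @ [e]"
  by (metis Rep_fg_gmul_snoc ginv_ginv ginv_neq)

lemma gmul_child_ginv: "Rep_fg (gmul g e) = Rep_fg g @ [e] \<Longrightarrow> gmul (gmul g e) (ginv e) = g"
  by (simp add: gmul_def rstep_def Rep_fg_inverse)

lemma nbhd_iff: "v \<in> nbhd g \<longleftrightarrow> (\<exists>e. v = gmul g e)"
  by (auto simp: nbhd_def)

lemma UNIV_gen: "(UNIV :: gen set) = {GA, GAi, GB, GBi}"
  by (auto intro: gen.exhaust)

lemma finite_nbhd [simp]: "finite (nbhd g)"
  by (simp add: nbhd_def UNIV_gen)

lemma wnorm_nbhd:
  assumes "v \<in> nbhd g"
  shows "wnorm v \<le> wnorm g + 1"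
proof -
  obtain e where "v = gmul g e"
    using assms nbhd_iff by auto
  then show ?thesis
    using Rep_fg_gmul_cases[of g e] by (auto simp: wnorm_def)
qed

lemma gmul_GA_neq_GB: "gmul g GA \<noteq> gmul g GB"
proof
  assume "gmul g GA = gmul g GB"
  then have "rstep (Rep_fg g) GA = rstep (Rep_fg g) GB"
    by (metis Rep_fg_gmul)
  then show False
    unfolding rstep_def by (auto split: if_splits dest: arg_cong[of _ _ length])
qed

section \<open>Ancestors and the tree distance\<close>

abbreviation lcp_length :: "'a list \<Rightarrow> 'a list \<Rightarrow> nat" where
  "lcp_length xs ys \<equiv> length (longest_common_prefix xs ys)"

lemma lcp_length_le: "lcp_length xs ys \<le> length xs" "lcp_length xs ys \<le> length ys"
  by (simp_all add: prefix_length_le longest_common_prefix_prefix1 longest_common_prefix_prefix2)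

lemma longest_common_prefix_self [simp]: "longest_common_prefix xs xs = xs"
  by (induction xs) auto

lemma longest_common_prefix_take:
  "longest_common_prefix (take i xs) ys = take i (longest_common_prefix xs ys)"
proof (induction xs arbitrary: i ys)
  case (Cons x xs)
  then show ?case by (cases ys; cases i) auto
qed simp

lemma lcp_length_snoc:
  "lcp_length xs ys \<le> lcp_length (xs @ [x]) ys \<and> lcp_length (xs @ [x]) ys \<le> Suc (lcp_length xs ys)"
proof (induction xs arbitrary: ys)
  case Nil
  then show ?case by (cases ys) auto
next
  case (Cons a xs)
  then show ?case by (cases ys) auto
qed

lemma longest_common_prefix_take_snoc:
  "i < length ys \<Longrightarrow> x \<noteq> ys ! i \<Longrightarrow> longest_common_prefix (take i ys @ [x]) ys = take i ys"
proof (induction ys arbitrary: i)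
  case (Cons y ys)
  then show ?case by (cases i) auto
qed simp

definition ancestor :: "fg \<Rightarrow> nat \<Rightarrow> fg" where
  "ancestor h i = Abs_fg (take i (Rep_fg h))"

lemma Rep_fg_ancestor [simp]: "Rep_fg (ancestor h i) = take i (Rep_fg h)"
  by (simp add: ancestor_def reduced_take)

lemma wnorm_ancestor [simp]: "wnorm (ancestor h i) = min i (wnorm h)"
  by (simp add: wnorm_def)

lemma ancestor_wnorm [simp]: "ancestor h (wnorm h) = h"
  by (simp add: ancestor_def wnorm_def Rep_fg_inverse)

lemma ancestor_Suc:
  assumes "i < wnorm h"
  shows "ancestor h (Suc i) = gmul (ancestor h i) (Rep_fg h ! i)"
proof -
  let ?H = "Rep_fg h"
  have "reduced (take i ?H @ [?H ! i])"
    using assms reduced_take[of ?H "Suc i"] by (simp add: wnorm_def take_Suc_conv_app_nth)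
  then have "Rep_fg (ancestor h i) = [] \<or> last (Rep_fg (ancestor h i)) \<noteq> ginv (?H ! i)"
    by (metis Rep_fg_ancestor reduced_snoc ginv_ginv)
  then have "Rep_fg (gmul (ancestor h i) (?H ! i)) = take (Suc i) ?H"
    using assms by (simp add: Rep_fg_gmul_snoc wnorm_def take_Suc_conv_app_nth)
  then show ?thesis
    by (metis Rep_fg_ancestor Rep_fg_inject)
qed

lemma ancestor_child:
  assumes "Rep_fg h' = Rep_fg h @ [e]" and "i \<le> wnorm h"
  shows "ancestor h' i = ancestor h i"
  using assms by (simp add: ancestor_def wnorm_def)

definition tree_dist :: "fg \<Rightarrow> fg \<Rightarrow> nat" where
  "tree_dist g h = wnorm g + wnorm h - 2 * lcp_length (Rep_fg g) (Rep_fg h)"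

lemma tree_dist_self [simp]: "tree_dist h h = 0"
  by (simp add: tree_dist_def wnorm_def)

lemma tree_dist_ancestor: "tree_dist (ancestor h i) h = wnorm h - i"
  by (simp add: tree_dist_def longest_common_prefix_take wnorm_def)

lemma tree_dist_nbhd:
  assumes "v \<in> nbhd g"
  shows "tree_dist g h \<le> Suc (tree_dist v h)"
proof -
  let ?w = "Rep_fg g" and ?H = "Rep_fg h"
  have le: "lcp_length ?w ?H \<le> length ?w" "lcp_length ?w ?H \<le> length ?H"
    by (rule lcp_length_le)+
  obtain e where v: "v = gmul g e"
    using assms nbhd_iff by auto
  consider "Rep_fg v = ?w @ [e]" | "Rep_fg v = take (length ?w - 1) ?w"
    using Rep_fg_gmul_cases[of g e] v by (auto simp: butlast_conv_take)
  then show ?thesis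
  proof cases
    case 1
    let ?p = "lcp_length ?w ?H" and ?q = "lcp_length (Rep_fg v) ?H"
    have "?p \<le> ?q" "?q \<le> Suc ?p" "?q \<le> length ?H" "length (Rep_fg v) = Suc (length ?w)"
      using 1 lcp_length_snoc[of ?w ?H e] lcp_length_le(2)[of "Rep_fg v" ?H] by simp_all
    then show ?thesis
      using le unfolding tree_dist_def wnorm_def by linarith
  next
    case 2
    then show ?thesis
      using le unfolding tree_dist_def wnorm_def by (simp add: longest_common_prefix_take)
  qed
qed

lemma nbhd_ancestor:
  assumes "i < wnorm h" and "v \<in> nbhd (ancestor h i)"
  shows "v = ancestor h (Suc i) \<or> wnorm h - i \<le> tree_dist v h"
proof -
  let ?H = "Rep_fg h"
  obtain e where v: "v = gmul (ancestor h i) e"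
    using assms(2) nbhd_iff by auto
  consider "Rep_fg v = take i ?H @ [e]" | "Rep_fg v = take (i - 1) ?H"
    using Rep_fg_gmul_cases[of "ancestor h i" e] v assms(1)
    by (auto simp: butlast_conv_take min_def wnorm_def)
  then show ?thesis
  proof cases
    case 1
    show ?thesis
    proof (cases "e = ?H ! i")
      case True
      then have "Rep_fg v = Rep_fg (ancestor h (Suc i))"
        using 1 assms(1) by (simp add: take_Suc_conv_app_nth wnorm_def)
      then show ?thesis
        by (metis Rep_fg_inject)
    next
      case False
      then have "wnorm h - i \<le> tree_dist v h"
        using 1 assms(1) by (simp add: tree_dist_def longest_common_prefix_take_snoc wnorm_def)
      then show ?thesis ..
    qed
  next
    case 2
    then have "v = ancestor h (i - 1)"
      by (metis Rep_fg_ancestor Rep_fg_inject)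
    then have "wnorm h - i \<le> tree_dist v h"
      by (simp add: tree_dist_ancestor)
    then show ?thesis ..
  qed
qed

section \<open>Bits, locality and the pattern of non-bit symbols\<close>

lemma isbit_simps [simp]: "isbit S0" "isbit S1" "\<not> isbit Iota" "\<not> isbit Beta"
  by (auto simp: isbit_def)

lemma isbit_bit_of [simp]: "isbit (bit_of n)"
  by (simp add: bit_of_def)

lemma isbit_CA: "isbit (c g) \<Longrightarrow> isbit (CA c g)"
  by (simp add: CA_def)

lemma isbit_funpow_CA_mono:
  assumes "isbit ((CA ^^ t) c g)" and "t \<le> t'"
  shows "isbit ((CA ^^ t') c g)"
  using assms(2,1) by (induction t' rule: dec_induct) (auto intro: isbit_CA)

lemma CA_cong:
  assumes bits: "\<forall>v\<in>nbhd g. \<forall>w\<in>nbhd v. isbit (c w) = isbit (c' w)"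
    and vals: "\<forall>v\<in>insert g (nbhd g). c v = c' v"
  shows "CA c g = CA c' g"
proof -
  have free: "free_pos c v = free_pos c' v" if "v \<in> nbhd g" for v
  proof -
    have "{w \<in> nbhd v. isbit (c w)} = {w \<in> nbhd v. isbit (c' w)}"
      using bits that by auto
    then show ?thesis
      unfolding free_pos_def using vals that by auto
  qed
  have "(\<exists>!v. v \<in> nbhd g \<and> c v = Iota) = (\<exists>!v. v \<in> nbhd g \<and> c' v = Iota)"
    using vals by (metis insert_iff)
  then have blocked: "blocked c g = blocked c' g"
    unfolding blocked_def using vals free by (simp cong: conj_cong)
  have bit_nbrs: "{v \<in> nbhd g. isbit (c v)} = {v \<in> nbhd g. isbit (c' v)}"
    using vals by auto
  have "(\<Sum>v\<in>{v \<in> nbhd g. isbit (c v)}. sval (c v)) = (\<Sum>v\<in>{v \<in> nbhd g. isbit (c' v)}. sval (c' v))"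
    unfolding bit_nbrs using vals by (intro sum.cong) auto
  then show ?thesis
    unfolding CA_def blocked using vals by simp
qed

lemma CA_local:
  assumes "\<forall>v. wnorm v \<le> wnorm g + 2 \<longrightarrow> c v = c' v"
  shows "CA c g = CA c' g"
proof (rule CA_cong)
  show "\<forall>v\<in>nbhd g. \<forall>w\<in>nbhd v. isbit (c w) = isbit (c' w)"
  proof (intro ballI)
    fix v w
    assume "v \<in> nbhd g" "w \<in> nbhd v"
    then have "wnorm w \<le> wnorm g + 2"
      using wnorm_nbhd[of w v] wnorm_nbhd[of v g] by linarith
    then show "isbit (c w) = isbit (c' w)"
      using assms by simp
  qed
  show "\<forall>v\<in>insert g (nbhd g). c v = c' v"
    using assms wnorm_nbhd by fastforce
qed

definition same_pattern :: "config \<Rightarrow> config \<Rightarrow> bool" where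
  "same_pattern c c' \<longleftrightarrow> (\<forall>g. isbit (c g) = isbit (c' g) \<and> (\<not> isbit (c g) \<longrightarrow> c g = c' g))"

lemma same_pattern_isbit: "same_pattern c c' \<Longrightarrow> isbit (c g) = isbit (c' g)"
  unfolding same_pattern_def by blast

lemma same_pattern_nonbit: "same_pattern c c' \<Longrightarrow> \<not> isbit (c g) \<Longrightarrow> c g = c' g"
  unfolding same_pattern_def by blast

lemma blocked_same_pattern:
  assumes "same_pattern c c'"
  shows "blocked c g = blocked c' g"
proof -
  have "c v = Iota \<longleftrightarrow> c' v = Iota" "c v = Beta \<longleftrightarrow> c' v = Beta" for v
    using same_pattern_nonbit[OF assms, of v] same_pattern_isbit[OF assms, of v] by auto
  moreover have "free_pos c v = free_pos c' v" for v
    unfolding free_pos_def using same_pattern_isbit[OF assms] by simp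
  ultimately show ?thesis
    unfolding blocked_def by simp
qed

lemma same_pattern_CA:
  assumes "same_pattern c c'"
  shows "same_pattern (CA c) (CA c')"
  unfolding same_pattern_def
proof
  fix g
  show "isbit (CA c g) = isbit (CA c' g) \<and> (\<not> isbit (CA c g) \<longrightarrow> CA c g = CA c' g)"
  proof (cases "isbit (c g)")
    case True
    then show ?thesis
      using same_pattern_isbit[OF assms] isbit_CA by metis
  next
    case False
    then show ?thesis
      using same_pattern_nonbit[OF assms] same_pattern_isbit[OF assms] blocked_same_pattern[OF assms]
      by (simp add: CA_def)
  qed
qed

lemma same_pattern_funpow_CA: "same_pattern c c' \<Longrightarrow> same_pattern ((CA ^^ t) c) ((CA ^^ t) c')"
  by (induction t) (auto intro: same_pattern_CA)

text \<open>Although CA has radius 2, the second neighbourhood enters only through which cells are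
  bits; for configurations with the same pattern, differences therefore spread at speed one.\<close>

lemma CA_diff_nbhd:
  assumes "same_pattern c c'" and "CA c v \<noteq> CA c' v"
  shows "\<exists>w\<in>insert v (nbhd v). c w \<noteq> c' w"
  using assms CA_cong same_pattern_isbit by blast

lemma bit_of_eq_iff: "bit_of a = bit_of b \<longleftrightarrow> even a = even b"
  by (auto simp: bit_of_def)

lemma CA_neq_if_single_nbhd_diff:
  assumes pat: "same_pattern c c'" and bit: "isbit (c g)" and eq: "c g = c' g"
    and vs: "vs \<in> nbhd g" and flip: "c vs \<noteq> c' vs"
    and others: "\<forall>v\<in>nbhd g. v \<noteq> vs \<longrightarrow> c v = c' v"
  shows "CA c g \<noteq> CA c' g"
proof -
  define S where "S = {v \<in> nbhd g. isbit (c v)}"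
  have S': "{v \<in> nbhd g. isbit (c' v)} = S"
    unfolding S_def using same_pattern_isbit[OF pat] by auto
  have "isbit (c vs)" "isbit (c' vs)"
    using flip same_pattern_nonbit[OF pat] same_pattern_isbit[OF pat] by metis+
  then have vs_S: "vs \<in> S" and odd: "odd (sval (c vs) + sval (c' vs))"
    using vs flip unfolding S_def by (auto simp: isbit_def)
  have rest: "(\<Sum>v\<in>S - {vs}. sval (c v)) = (\<Sum>v\<in>S - {vs}. sval (c' v))"
    using others unfolding S_def by (intro sum.cong) auto
  have "(\<Sum>v\<in>S. sval (c v)) = sval (c vs) + (\<Sum>v\<in>S - {vs}. sval (c v))"
       "(\<Sum>v\<in>S. sval (c' v)) = sval (c' vs) + (\<Sum>v\<in>S - {vs}. sval (c v))"
    using vs_S rest by (simp_all add: S_def sum.remove)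
  then have "even (sval (c g) + (\<Sum>v\<in>S. sval (c v))) \<noteq> even (sval (c' g) + (\<Sum>v\<in>S. sval (c' v)))"
    using eq odd by auto
  then show ?thesis
    using bit eq unfolding CA_def S' S_def[symmetric] by (simp add: bit_of_eq_iff)
qed

section \<open>Rays of bits\<close>

text \<open>If no child of the bit cell g is a bit, g has at most one bit neighbour (its parent) and
  is not free; then a non-bit child sees the bit g, so it is neither a blocked \<open>\<iota>\<close> nor a blocked
  \<open>\<beta>\<close>, and it becomes 0.\<close>

lemma CA_bit_child:
  assumes bit: "isbit (c g)"
  obtains e where "Rep_fg (gmul g e) = Rep_fg g @ [e]" and "isbit (CA c (gmul g e))"
proof (cases "\<exists>e. Rep_fg (gmul g e) = Rep_fg g @ [e] \<and> isbit (c (gmul g e))")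
  case True
  then show ?thesis
    using that isbit_CA by blast
next
  case no_bit_child: False
  obtain e where child: "Rep_fg (gmul g e) = Rep_fg g @ [e]"
    using exists_child by blast
  define v where "v = gmul g e"
  have "\<not> isbit (c v)"
    using no_bit_child child v_def by blast
  have "gmul v (ginv e) = g"
    unfolding v_def by (rule gmul_child_ginv[OF child])
  then have "g \<in> nbhd v"
    by (auto simp: nbhd_iff)
  have "{w \<in> nbhd g. isbit (c w)} \<subseteq> {Abs_fg (butlast (Rep_fg g))}"
  proof
    fix w
    assume "w \<in> {w \<in> nbhd g. isbit (c w)}"
    then obtain e' where w: "w = gmul g e'" and "isbit (c w)"
      using nbhd_iff by auto
    then have "Rep_fg w \<noteq> Rep_fg g @ [e']"
      using no_bit_child by blast
    then have "Rep_fg w = butlast (Rep_fg g)"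
      using w Rep_fg_gmul_cases by metis
    then show "w \<in> {Abs_fg (butlast (Rep_fg g))}"
      by (metis Rep_fg_inverse singletonI)
  qed
  then have "card {w \<in> nbhd g. isbit (c w)} \<le> 1"
    using card_mono[of "{Abs_fg (butlast (Rep_fg g))}"] by simp
  then have "\<not> free_pos c g"
    by (simp add: free_pos_def)
  then have "\<not> blocked c v"
    unfolding blocked_def using \<open>g \<in> nbhd v\<close> bit by (metis isbit_simps(3,4))
  then have "isbit (CA c v)"
    using \<open>\<not> isbit (c v)\<close> by (simp add: CA_def)
  then show ?thesis
    using that child v_def by blast
qed

lemma bit_ray:
  assumes "isbit ((CA ^^ T) c g)"
  shows "\<exists>h. wnorm h = wnorm g + J \<and> ancestor h (wnorm g) = g \<and>
    (\<forall>j\<le>J. isbit ((CA ^^ (T + j)) c (ancestor h (wnorm g + j))))"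
proof (induction J)
  case 0
  show ?case
    using assms by (intro exI[of _ g]) simp
next
  case (Suc J)
  then obtain h where h: "wnorm h = wnorm g + J" "ancestor h (wnorm g) = g"
    and bits: "\<forall>j\<le>J. isbit ((CA ^^ (T + j)) c (ancestor h (wnorm g + j)))"
    by blast
  have "isbit ((CA ^^ (T + J)) c h)"
    using bits h(1) by (metis ancestor_wnorm order_refl)
  then obtain e where child: "Rep_fg (gmul h e) = Rep_fg h @ [e]"
    and bit: "isbit ((CA ^^ (T + Suc J)) c (gmul h e))"
    using CA_bit_child by (metis add_Suc_right funpow.simps(2) o_apply)
  have wnorm_child: "wnorm (gmul h e) = wnorm g + Suc J"
    using child h(1) by (simp add: wnorm_def)
  show ?case
  proof (intro exI conjI allI impI)
    show "wnorm (gmul h e) = wnorm g + Suc J"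
      by (fact wnorm_child)
    show "ancestor (gmul h e) (wnorm g) = g"
      using ancestor_child[OF child] h by simp
    have tip: "ancestor (gmul h e) (Suc (wnorm g + J)) = gmul h e"
      by (metis ancestor_wnorm wnorm_child add_Suc_right)
    fix j
    assume "j \<le> Suc J"
    then show "isbit ((CA ^^ (T + j)) c (ancestor (gmul h e) (wnorm g + j)))"
      using bit bits ancestor_child[OF child] h(1)
      by (cases "j = Suc J") (auto simp: tip)
  qed
qed

section \<open>Configurations without bits\<close>

lemma CA_const_Iota: "CA (\<lambda>_. Iota) = (\<lambda>_. Iota)"
  by (auto simp: CA_def blocked_def)

lemma funpow_CA_const_Iota: "(CA ^^ t) (\<lambda>_. Iota) = (\<lambda>_. Iota)"
  by (induction t) (simp_all add: CA_const_Iota)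

text \<open>A ball of \<open>\<iota>\<close> surrounded by 0 erodes by one layer per step: an \<open>\<iota>\<close> cell with a
  0 child is not blocked.\<close>

lemma funpow_CA_Iota_ball:
  "(CA ^^ t) (\<lambda>g. if wnorm g \<le> n then Iota else S0) = (\<lambda>g. if wnorm g + t \<le> n then Iota else S0)"
proof (induction t)
  case (Suc t)
  define c where "c = (\<lambda>g. if wnorm g + t \<le> n then Iota else S0)"
  have "CA c g = (if wnorm g + Suc t \<le> n then Iota else S0)" for g
  proof (cases "wnorm g + t \<le> n")
    case True
    obtain e where child: "Rep_fg (gmul g e) = Rep_fg g @ [e]"
      using exists_child by blast
    have "gmul g e \<in> nbhd g"
      by (simp add: nbhd_def)
    moreover have "c (gmul g e) = Iota \<longleftrightarrow> wnorm g + Suc t \<le> n"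
      using child by (simp add: c_def wnorm_def)
    moreover have "\<forall>v\<in>nbhd g. c v \<noteq> S1"
      by (simp add: c_def)
    moreover have "wnorm g + Suc t \<le> n \<Longrightarrow> \<forall>v\<in>nbhd g. c v = Iota"
      unfolding c_def using wnorm_nbhd by fastforce
    ultimately show ?thesis
      using True by (auto simp: CA_def blocked_def c_def)
  next
    case False
    then show ?thesis
      by (simp add: CA_def c_def bit_of_def)
  qed
  then show ?case
    using Suc by (simp add: c_def)
qed simp

lemma const_Iota_if_no_bit:
  assumes "\<forall>g. \<not> isbit (CA x g)"
  shows "x = (\<lambda>_. Iota)"
proof
  fix g
  have no_bit: "\<not> isbit (x v)" for v
    using assms isbit_CA by blast
  have "blocked x g"
    using assms no_bit[of g] by (auto simp: CA_def split: if_splits)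
  show "x g = Iota"
  proof (rule ccontr)
    assume "x g \<noteq> Iota"
    then have "x g = Beta"
      using no_bit[of g] by (cases "x g") auto
    text \<open>A blocked \<open>\<beta>\<close> needs free neighbours, i.e. bits, besides its unique \<open>\<iota>\<close> neighbour.\<close>
    then have "\<exists>!v. v \<in> nbhd g \<and> x v = Iota" "\<forall>v\<in>nbhd g. x v = Iota"
      using \<open>blocked x g\<close> \<open>x g \<noteq> Iota\<close> no_bit unfolding blocked_def free_pos_def by auto
    moreover have "gmul g GA \<in> nbhd g" "gmul g GB \<in> nbhd g"
      by (simp_all add: nbhd_def)
    ultimately show False
      using gmul_GA_neq_GB by metis
  qed
qed

section \<open>The Cantor metric\<close>

lemma cdist_le_if_agree:
  assumes "\<forall>g. wnorm g \<le> n \<longrightarrow> x g = y g"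
  shows "cdist x y \<le> (1/2) ^ Suc n"
proof (cases "x = y")
  case False
  define k where "k = (LEAST k. \<exists>g. wnorm g = k \<and> x g \<noteq> y g)"
  from False have "\<exists>k g. wnorm g = k \<and> x g \<noteq> y g"
    by blast
  then obtain g where "wnorm g = k" "x g \<noteq> y g"
    using LeastI_ex[of "\<lambda>k. \<exists>g. wnorm g = k \<and> x g \<noteq> y g"] unfolding k_def by blast
  then have "Suc n \<le> k"
    using assms by (metis not_less_eq_eq)
  then have "(1/2) ^ k \<le> ((1/2) ^ Suc n :: real)"
    by (intro power_decreasing) auto
  then show ?thesis
    using False by (simp add: cdist_def k_def)
qed (simp add: cdist_def)

lemma cdist_ge_if_differ:
  assumes "x g \<noteq> y g"
  shows "(1/2) ^ wnorm g \<le> cdist x y"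
proof -
  have "(LEAST k. \<exists>g. wnorm g = k \<and> x g \<noteq> y g) \<le> wnorm g"
    using assms by (intro Least_le) auto
  then show ?thesis
    using assms by (auto simp: cdist_def power_decreasing)
qed

lemma not_equicont_pointI:
  assumes "\<And>n. n0 \<le> n \<Longrightarrow> \<exists>y t. (\<forall>g. wnorm g \<le> n \<longrightarrow> y g = x g) \<and> (F ^^ t) y g0 \<noteq> (F ^^ t) x g0"
  shows "\<not> equicont_point F x"
proof
  assume "equicont_point F x"
  moreover have "(0::real) < (1/2) ^ Suc (wnorm g0)"
    by simp
  ultimately obtain \<delta> where "\<delta> > 0" and \<delta>: "\<And>t y. cdist x y \<le> \<delta> \<Longrightarrow>
      cdist ((F ^^ t) x) ((F ^^ t) y) \<le> (1/2) ^ Suc (wnorm g0)"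
    unfolding equicont_point_def by blast
  then obtain n1 where "(1/2) ^ n1 < \<delta>"
    using real_arch_pow_inv[of \<delta> "1/2"] by auto
  then obtain y t where agree: "\<forall>g. wnorm g \<le> max n0 n1 \<longrightarrow> y g = x g"
    and differ: "(F ^^ t) y g0 \<noteq> (F ^^ t) x g0"
    using assms[of "max n0 n1"] by auto
  have "cdist x y \<le> (1/2) ^ Suc (max n0 n1)"
    using agree by (intro cdist_le_if_agree) simp
  also have "\<dots> \<le> (1/2) ^ n1"
    by (intro power_decreasing) auto
  finally have "cdist ((F ^^ t) x) ((F ^^ t) y) \<le> (1/2) ^ Suc (wnorm g0)"
    using \<delta> \<open>(1/2) ^ n1 < \<delta>\<close> by simp
  moreover have "(1/2) ^ wnorm g0 \<le> cdist ((F ^^ t) x) ((F ^^ t) y)"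
    using differ by (intro cdist_ge_if_differ) simp
  moreover have "(0::real) < (1/2) ^ wnorm g0"
    by simp
  ultimately show False
    by simp
qed

section \<open>Propagation of a flipped bit\<close>

lemma diff_within_tree_dist:
  assumes "same_pattern c c'" and "\<forall>v. c v \<noteq> c' v \<longrightarrow> v = h"
  shows "(CA ^^ t) c v \<noteq> (CA ^^ t) c' v \<Longrightarrow> tree_dist v h \<le> t"
proof (induction t arbitrary: v)
  case 0
  then show ?case
    using assms(2) by simp
next
  case (Suc t)
  then have "CA ((CA ^^ t) c) v \<noteq> CA ((CA ^^ t) c') v"
    by simp
  then obtain w where "w \<in> insert v (nbhd v)" "(CA ^^ t) c w \<noteq> (CA ^^ t) c' w"
    using CA_diff_nbhd[OF same_pattern_funpow_CA[OF assms(1)]] by blast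
  then show ?case
    using Suc.IH tree_dist_nbhd[of w v h] by fastforce
qed

text \<open>The ancestor the difference enters next is a bit whose only differing neighbour is the
  cell just flipped (the others are too far from h), so the XOR rule flips it as well.\<close>

lemma diff_reaches_ancestor:
  assumes pat: "same_pattern c c'" and flip: "c h \<noteq> c' h" and others: "\<forall>v. v \<noteq> h \<longrightarrow> c v = c' v"
    and "K \<le> wnorm h"
    and bits: "\<forall>k<K. isbit ((CA ^^ k) c (ancestor h (wnorm h - Suc k)))"
  shows "(CA ^^ K) c (ancestor h (wnorm h - K)) \<noteq> (CA ^^ K) c' (ancestor h (wnorm h - K))"
  using \<open>K \<le> wnorm h\<close> bits
proof (induction K)
  case 0
  then show ?case
    using flip by simp
next
  case (Suc k)
  define i where "i = wnorm h - Suc k"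
  let ?c = "(CA ^^ k) c" and ?c' = "(CA ^^ k) c'"
  have i: "i < wnorm h" "Suc i = wnorm h - k"
    using Suc.prems(1) by (auto simp: i_def)
  have near: "tree_dist v h \<le> k" if "?c v \<noteq> ?c' v" for v
    using diff_within_tree_dist[OF pat] others that by blast
  have "ancestor h (Suc i) \<in> nbhd (ancestor h i)"
    using ancestor_Suc[OF i(1)] by (simp add: nbhd_def)
  moreover have "?c (ancestor h (Suc i)) \<noteq> ?c' (ancestor h (Suc i))"
    using Suc i(2) by simp
  moreover have "?c (ancestor h i) = ?c' (ancestor h i)"
    using near[of "ancestor h i"] i by (force simp: tree_dist_ancestor)
  moreover have "\<forall>v\<in>nbhd (ancestor h i). v \<noteq> ancestor h (Suc i) \<longrightarrow> ?c v = ?c' v"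
    using near nbhd_ancestor[OF i(1)] i by fastforce
  moreover have "isbit (?c (ancestor h i))"
    using Suc.prems(2) by (simp add: i_def)
  ultimately have "CA ?c (ancestor h i) \<noteq> CA ?c' (ancestor h i)"
    using CA_neq_if_single_nbhd_diff[OF same_pattern_funpow_CA[OF pat]] by blast
  then show ?case
    by (simp add: i_def)
qed

section \<open>Sensitivity\<close>

lemma sensitive_const_Iota:
  "\<exists>y t. (\<forall>g. wnorm g \<le> n \<longrightarrow> y g = Iota) \<and> (CA ^^ t) y (Abs_fg []) \<noteq> (CA ^^ t) (\<lambda>_. Iota) (Abs_fg [])"
proof (intro exI conjI)
  show "\<forall>g. wnorm g \<le> n \<longrightarrow> (\<lambda>g. if wnorm g \<le> n then Iota else S0) g = Iota"
    by simp
  show "(CA ^^ Suc n) (\<lambda>g. if wnorm g \<le> n then Iota else S0) (Abs_fg []) \<noteq> (CA ^^ Suc n) (\<lambda>_. Iota) (Abs_fg [])"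
    unfolding funpow_CA_Iota_ball funpow_CA_const_Iota by (simp add: wnorm_def)
qed

text \<open>Outside the ball of radius n the configuration is replaced by 0, so that the ray cells
  beyond that ball are bits from the start; the flipped bit is planted at distance 2n + 2 beyond g0,
  far enough for every ray cell to have become a bit by the time the difference arrives.\<close>

lemma sensitive_at_bit:
  assumes bit: "isbit (CA x g0)" and n: "wnorm g0 + 2 \<le> n"
  shows "\<exists>y t. (\<forall>g. wnorm g \<le> n \<longrightarrow> y g = x g) \<and> (CA ^^ t) y g0 \<noteq> (CA ^^ t) x g0"
proof -
  define N0 J where "N0 = wnorm g0" and "J = 2 * n + 2"
  define y where "y g = (if wnorm g \<le> n then x g else S0)" for g
  have "CA y g0 = CA x g0"
    using n by (intro CA_local) (simp add: y_def)
  then have "isbit ((CA ^^ 1) y g0)"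
    using bit by simp
  then obtain h where h: "wnorm h = N0 + J" "ancestor h N0 = g0"
    and ray: "\<forall>j\<le>J. isbit ((CA ^^ (1 + j)) y (ancestor h (N0 + j)))"
    unfolding N0_def using bit_ray by blast
  define y' where "y' = y(h := S1)"
  have "y h = S0"
    using h(1) by (simp add: y_def J_def)
  then have "same_pattern y y'"
    by (simp add: same_pattern_def y'_def)
  have "isbit ((CA ^^ k) y (ancestor h (wnorm h - Suc k)))" if "k < J" for k
  proof (cases "n < wnorm h - Suc k")
    case True
    then show ?thesis
      using isbit_funpow_CA_mono[of 0 y] by (simp add: y_def)
  next
    case False
    define j where "j = wnorm h - Suc k - N0"
    have "wnorm h - Suc k = N0 + j" "j \<le> J" "1 + j \<le> k"
      using False that h(1) by (auto simp: j_def J_def)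
    then show ?thesis
      using ray isbit_funpow_CA_mono by metis
  qed
  then have "(CA ^^ J) y g0 \<noteq> (CA ^^ J) y' g0"
    using diff_reaches_ancestor[OF \<open>same_pattern y y'\<close>, of h J] \<open>y h = S0\<close> h
    by (simp add: y'_def)
  moreover have "\<forall>g. wnorm g \<le> n \<longrightarrow> y g = x g" "\<forall>g. wnorm g \<le> n \<longrightarrow> y' g = x g"
    using h(1) by (auto simp: y'_def y_def J_def)
  ultimately show ?thesis
    by metis
qed

theorem lemma8:
  shows "\<not> (\<exists>x. equicont_point CA x)"
proof
  assume "\<exists>x. equicont_point CA x"
  then obtain x where x: "equicont_point CA x" ..
  show False
  proof (cases "\<exists>g0. isbit (CA x g0)")
    case True
    then obtain g0 where "isbit (CA x g0)" ..
    then have "\<not> equicont_point CA x"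
      using sensitive_at_bit by (intro not_equicont_pointI[of "wnorm g0 + 2"])
    then show False
      using x by contradiction
  next
    case False
    then have "x = (\<lambda>_. Iota)"
      by (simp add: const_Iota_if_no_bit)
    then have "\<not> equicont_point CA x"
      using sensitive_const_Iota by (intro not_equicont_pointI[of 0]) simp
    then show False
      using x by contradiction
  qed
qed

end
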